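(* Let $H$ be a monoid. A set $X\in\mathcal{P}_{\mathrm{fin},1}(H)$ is irreducible but not an atom in $\mathcal{P}_{\mathrm{fin},1}(H)$ if and only if $X=\{1_H,x\}$ for some $x\in H$ such that $x^2=1_H$ or $x^2=x$.
   Context: For a monoid $H$, $\mathcal{P}_{\mathrm{fin},1}(H)$ denotes the set of all non-empty finite subsets of $H$ containing $1_H$, a monoid under $XY=\{xy:x\in X,y\in Y\}$ with identity $\{1_H\}$. In a monoid $M$: $x\mid_M y$ iff $y\in MxM=\{uxv:u,v\in M\}$; $x,y$ are associated if each divides the other; $x$ properly divides $y$ if $x\mid_M y$ and $y\nmid_M x$. A unit-divisor is an element dividing $1_M$; other elements are non-unit-divisors. An irreducible is a non-unit-divisor $a$ such that $a\neq xy$ for all non-unit-divisors $x,y$ properly dividing $a$. An atom is a non-unit-divisor that is not a product of two non-unit-divisors. *)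

theory Defs
  imports Main
begin

definition mon_dvd :: "'m set \<Rightarrow> ('m \<Rightarrow> 'm \<Rightarrow> 'm) \<Rightarrow> 'm \<Rightarrow> 'm \<Rightarrow> bool" where
  "mon_dvd M f x y \<longleftrightarrow> (\<exists>u\<in>M. \<exists>v\<in>M. y = f (f u x) v)"

definition mon_unit_divisor :: "'m set \<Rightarrow> ('m \<Rightarrow> 'm \<Rightarrow> 'm) \<Rightarrow> 'm \<Rightarrow> 'm \<Rightarrow> bool" where
  "mon_unit_divisor M f e x \<longleftrightarrow> mon_dvd M f x e"

definition mon_proper_dvd :: "'m set \<Rightarrow> ('m \<Rightarrow> 'm \<Rightarrow> 'm) \<Rightarrow> 'm \<Rightarrow> 'm \<Rightarrow> bool" where
  "mon_proper_dvd M f x y \<longleftrightarrow> mon_dvd M f x y \<and> \<not> mon_dvd M f y x"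

definition mon_irreducible :: "'m set \<Rightarrow> ('m \<Rightarrow> 'm \<Rightarrow> 'm) \<Rightarrow> 'm \<Rightarrow> 'm \<Rightarrow> bool" where
  "mon_irreducible M f e a \<longleftrightarrow> a \<in> M \<and> \<not> mon_unit_divisor M f e a \<and>
     (\<forall>x\<in>M. \<forall>y\<in>M. \<not> mon_unit_divisor M f e x \<and> \<not> mon_unit_divisor M f e y \<and>
        mon_proper_dvd M f x a \<and> mon_proper_dvd M f y a \<longrightarrow> a \<noteq> f x y)"

definition mon_atom :: "'m set \<Rightarrow> ('m \<Rightarrow> 'm \<Rightarrow> 'm) \<Rightarrow> 'm \<Rightarrow> 'm \<Rightarrow> bool" where
  "mon_atom M f e a \<longleftrightarrow> a \<in> M \<and> \<not> mon_unit_divisor M f e a \<and>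
     (\<forall>x\<in>M. \<forall>y\<in>M. \<not> mon_unit_divisor M f e x \<and> \<not> mon_unit_divisor M f e y \<longrightarrow> a \<noteq> f x y)"

definition Pfin1 :: "'a::monoid_mult set set" where
  "Pfin1 = {X. finite X \<and> X \<noteq> {} \<and> 1 \<in> X}"

definition setmul :: "'a::monoid_mult set \<Rightarrow> 'a set \<Rightarrow> 'a set" where
  "setmul X Y = {x * y | x y. x \<in> X \<and> y \<in> Y}"

end

theory Submission
  imports Defs
begin

text \<open>
  Every factor of \<open>X\<close> in \<open>P\<^sub>f\<^sub>i\<^sub>n\<^sub>,\<^sub>1(H)\<close> is a subset of \<open>X\<close>, so \<open>{1}\<close> is the only unit divisor
  and \<open>X\<close> is irreducible iff in every factorisation \<open>X = AB\<close> into non-trivial factors one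
  factor is \<open>X\<close> itself. If moreover \<open>X\<close> is not an atom, some such factorisation exists, say
  \<open>X = XB\<close>; then any \<open>b \<in> B - {1}\<close> lies in \<open>X\<close> and satisfies \<open>Xb \<subseteq> X\<close>, hence
  \<open>X = (X - {b}){1, b}\<close>. Neither factor is \<open>X\<close>, so \<open>X - {b} = {1}\<close>, i.e. \<open>X = {1, b}\<close>, and
  \<open>b\<^sup>2 \<in> Xb \<subseteq> X\<close>. Conversely, a pair \<open>{1, x}\<close> with \<open>x \<noteq> 1\<close> is irreducible because its only
  other subset containing \<open>1\<close> is \<open>{1}\<close>, and it is not an atom when \<open>x\<^sup>2 \<in> {1, x}\<close>, as then
  \<open>{1, x} = {1, x}{1, x}\<close>.
\<close>

lemma setmul_one_left [simp]: "setmul {1} B = B"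
  unfolding setmul_def by auto

lemma setmul_one_right [simp]: "setmul A {1} = A"
  unfolding setmul_def by auto

lemma subset_setmul_left: "1 \<in> B \<Longrightarrow> A \<subseteq> setmul A B"
  unfolding setmul_def by force

lemma subset_setmul_right: "1 \<in> A \<Longrightarrow> B \<subseteq> setmul A B"
  unfolding setmul_def by force

lemma one_Pfin1 [simp]: "{1} \<in> Pfin1"
  by (simp add: Pfin1_def)

lemma mon_dvd_Pfin1_imp_subset: "mon_dvd Pfin1 setmul Y X \<Longrightarrow> Y \<subseteq> X"
  unfolding mon_dvd_def Pfin1_def
  by (blast dest: subset_setmul_left subset_setmul_right)

lemma mon_unit_divisor_Pfin1_iff:
  assumes "Y \<in> Pfin1"
  shows "mon_unit_divisor Pfin1 setmul {1} Y \<longleftrightarrow> Y = {1}"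
proof
  assume "mon_unit_divisor Pfin1 setmul {1} Y"
  then have "Y \<subseteq> {1}"
    unfolding mon_unit_divisor_def by (rule mon_dvd_Pfin1_imp_subset)
  then show "Y = {1}"
    using assms by (auto simp: Pfin1_def)
next
  assume "Y = {1}"
  then show "mon_unit_divisor Pfin1 setmul {1} Y"
    unfolding mon_unit_divisor_def mon_dvd_def by (intro bexI[of _ "{1}"]) auto
qed

lemma mon_dvd_setmul_left: "B \<in> Pfin1 \<Longrightarrow> mon_dvd Pfin1 setmul A (setmul A B)"
  unfolding mon_dvd_def by (intro bexI[of _ "{1}"] bexI[of _ B]) auto

lemma mon_dvd_setmul_right: "A \<in> Pfin1 \<Longrightarrow> mon_dvd Pfin1 setmul B (setmul A B)"
  unfolding mon_dvd_def by (intro bexI[of _ A] bexI[of _ "{1}"]) auto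

lemma mon_proper_dvd_Pfin1_iff:
  "mon_proper_dvd Pfin1 setmul A X \<longleftrightarrow> mon_dvd Pfin1 setmul A X \<and> A \<noteq> X"
  unfolding mon_proper_dvd_def
  using mon_dvd_setmul_left[of "{1}" X] mon_dvd_Pfin1_imp_subset by auto

lemma mon_irreducible_Pfin1_iff:
  assumes X: "X \<in> Pfin1"
  shows "mon_irreducible Pfin1 setmul {1} X \<longleftrightarrow> X \<noteq> {1} \<and>
    (\<forall>A\<in>Pfin1. \<forall>B\<in>Pfin1. X = setmul A B \<longrightarrow> A = {1} \<or> B = {1} \<or> A = X \<or> B = X)"
    (is "_ \<longleftrightarrow> _ \<and> ?factorisations")
proof -
  have proper_factors: "mon_proper_dvd Pfin1 setmul A X \<longleftrightarrow> A \<noteq> X"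
    "mon_proper_dvd Pfin1 setmul B X \<longleftrightarrow> B \<noteq> X"
    if "A \<in> Pfin1" "B \<in> Pfin1" "X = setmul A B" for A B
    using that mon_dvd_setmul_left mon_dvd_setmul_right
    by (auto simp: mon_proper_dvd_Pfin1_iff)
  show ?thesis
  proof
    assume irr: "mon_irreducible Pfin1 setmul {1} X"
    have "A = {1} \<or> B = {1} \<or> A = X \<or> B = X"
      if "A \<in> Pfin1" "B \<in> Pfin1" "X = setmul A B" for A B
      using irr that proper_factors[OF that] mon_unit_divisor_Pfin1_iff[OF that(1)]
        mon_unit_divisor_Pfin1_iff[OF that(2)]
      unfolding mon_irreducible_def by blast
    with irr X show "X \<noteq> {1} \<and> ?factorisations"
      unfolding mon_irreducible_def by (simp add: mon_unit_divisor_Pfin1_iff)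
  next
    assume "X \<noteq> {1} \<and> ?factorisations"
    with X proper_factors show "mon_irreducible Pfin1 setmul {1} X"
      unfolding mon_irreducible_def by (simp add: mon_unit_divisor_Pfin1_iff) metis
  qed
qed

lemma mon_atom_Pfin1_iff:
  assumes "X \<in> Pfin1"
  shows "mon_atom Pfin1 setmul {1} X \<longleftrightarrow> X \<noteq> {1} \<and>
    (\<forall>A\<in>Pfin1. \<forall>B\<in>Pfin1. X = setmul A B \<longrightarrow> A = {1} \<or> B = {1})"
  using assms unfolding mon_atom_def by (auto simp: mon_unit_divisor_Pfin1_iff)

lemma setmul_remove_right_pair:
  assumes "1 \<in> X" "b \<in> X" "b \<noteq> 1" "\<forall>y\<in>X. y * b \<in> X"
  shows "setmul (X - {b}) {1, b} = X"
proof
  show "setmul (X - {b}) {1, b} \<subseteq> X"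
    using assms unfolding setmul_def by auto
  show "X \<subseteq> setmul (X - {b}) {1, b}"
  proof
    fix y assume "y \<in> X"
    then have "y = y * 1 \<and> y \<in> X - {b} \<or> y = 1 * b \<and> 1 \<in> X - {b}"
      using assms by auto
    then show "y \<in> setmul (X - {b}) {1, b}"
      unfolding setmul_def by blast
  qed
qed

lemma setmul_remove_left_pair:
  assumes "1 \<in> X" "b \<in> X" "b \<noteq> 1" "\<forall>y\<in>X. b * y \<in> X"
  shows "setmul {1, b} (X - {b}) = X"
proof
  show "setmul {1, b} (X - {b}) \<subseteq> X"
    using assms unfolding setmul_def by auto
  show "X \<subseteq> setmul {1, b} (X - {b})"
  proof
    fix y assume "y \<in> X"
    then have "y = 1 * y \<and> y \<in> X - {b} \<or> y = b * 1 \<and> 1 \<in> X - {b}"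
      using assms by auto
    then show "y \<in> setmul {1, b} (X - {b})"
      unfolding setmul_def by blast
  qed
qed

lemma mon_irreducible_Pfin1_factor:
  assumes "mon_irreducible Pfin1 setmul {1} X" "A \<in> Pfin1" "B \<in> Pfin1" "setmul A B = X"
  shows "A = {1} \<or> B = {1} \<or> A = X \<or> B = X"
proof -
  have "X \<in> Pfin1"
    using assms(1) by (simp add: mon_irreducible_def)
  then show ?thesis
    using assms mon_irreducible_Pfin1_iff by blast
qed

lemma mon_irreducible_Pfin1_absorbing_right:
  assumes irr: "mon_irreducible Pfin1 setmul {1} X"
    and B: "B \<in> Pfin1" "B \<noteq> {1}" and absorb: "setmul X B = X"
  shows "\<exists>b. b \<noteq> 1 \<and> X = {1, b} \<and> b * b \<in> X"
proof -
  have X: "X \<in> Pfin1" and "1 \<in> X"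
    using irr by (auto simp: mon_irreducible_def Pfin1_def)
  obtain b where "b \<in> B" "b \<noteq> 1"
    using B by (auto simp: Pfin1_def)
  then have stable: "\<forall>y\<in>X. y * b \<in> X"
    using absorb unfolding setmul_def by blast
  with \<open>1 \<in> X\<close> have "b \<in> X"
    by fastforce
  have "setmul (X - {b}) {1, b} = X"
    using \<open>1 \<in> X\<close> \<open>b \<in> X\<close> \<open>b \<noteq> 1\<close> stable by (rule setmul_remove_right_pair)
  moreover have "X - {b} \<in> Pfin1" "{1, b} \<in> Pfin1"
    using X \<open>b \<noteq> 1\<close> by (auto simp: Pfin1_def)
  ultimately have "X - {b} = {1} \<or> {1, b} = {1} \<or> X - {b} = X \<or> {1, b} = X"
    using irr mon_irreducible_Pfin1_factor by blast
  then have "X - {b} = {1} \<or> {1, b} = X"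
    using \<open>b \<in> X\<close> \<open>b \<noteq> 1\<close> by auto
  then have "X = {1, b}"
    using \<open>1 \<in> X\<close> \<open>b \<in> X\<close> by auto
  with stable \<open>b \<noteq> 1\<close> show ?thesis
    by blast
qed

lemma mon_irreducible_Pfin1_absorbing_left:
  assumes irr: "mon_irreducible Pfin1 setmul {1} X"
    and A: "A \<in> Pfin1" "A \<noteq> {1}" and absorb: "setmul A X = X"
  shows "\<exists>a. a \<noteq> 1 \<and> X = {1, a} \<and> a * a \<in> X"
proof -
  have X: "X \<in> Pfin1" and "1 \<in> X"
    using irr by (auto simp: mon_irreducible_def Pfin1_def)
  obtain a where "a \<in> A" "a \<noteq> 1"
    using A by (auto simp: Pfin1_def)
  then have stable: "\<forall>y\<in>X. a * y \<in> X"
    using absorb unfolding setmul_def by blast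
  with \<open>1 \<in> X\<close> have "a \<in> X"
    by fastforce
  have "setmul {1, a} (X - {a}) = X"
    using \<open>1 \<in> X\<close> \<open>a \<in> X\<close> \<open>a \<noteq> 1\<close> stable by (rule setmul_remove_left_pair)
  moreover have "X - {a} \<in> Pfin1" "{1, a} \<in> Pfin1"
    using X \<open>a \<noteq> 1\<close> by (auto simp: Pfin1_def)
  ultimately have "X - {a} = {1} \<or> {1, a} = {1} \<or> X - {a} = X \<or> {1, a} = X"
    using irr mon_irreducible_Pfin1_factor by blast
  then have "X - {a} = {1} \<or> {1, a} = X"
    using \<open>a \<in> X\<close> \<open>a \<noteq> 1\<close> by auto
  then have "X = {1, a}"
    using \<open>1 \<in> X\<close> \<open>a \<in> X\<close> by auto
  with stable \<open>a \<noteq> 1\<close> show ?thesis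
    by blast
qed

lemma mon_irreducible_Pfin1_pair:
  assumes "x \<noteq> 1"
  shows "mon_irreducible Pfin1 setmul {1} {1, x}"
proof (rule mon_irreducible_Pfin1_iff[THEN iffD2])
  show "{1, x} \<in> Pfin1"
    by (simp add: Pfin1_def)
  have "A = {1} \<or> A = {1, x}" if "A \<in> Pfin1" "B \<in> Pfin1" "{1, x} = setmul A B" for A B
  proof -
    have "A \<subseteq> {1, x}"
      using that(2,3) subset_setmul_left[of B A] by (simp add: Pfin1_def)
    with that(1) show ?thesis
      by (auto simp: Pfin1_def)
  qed
  with assms show "{1, x} \<noteq> {1} \<and>
    (\<forall>A\<in>Pfin1. \<forall>B\<in>Pfin1. {1, x} = setmul A B \<longrightarrow> A = {1} \<or> B = {1} \<or> A = {1, x} \<or> B = {1, x})"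
    by blast
qed

lemma not_mon_atom_Pfin1_pair:
  assumes "x * x \<in> {1, x}"
  shows "\<not> mon_atom Pfin1 setmul {1} {1, x}"
proof -
  have pair: "{1, x} \<in> Pfin1"
    by (simp add: Pfin1_def)
  have "setmul {1, x} {1, x} = {1, x}"
  proof
    show "setmul {1, x} {1, x} \<subseteq> {1, x}"
      using assms unfolding setmul_def by auto
    show "{1, x} \<subseteq> setmul {1, x} {1, x}"
      by (rule subset_setmul_left) simp
  qed
  with pair show ?thesis
    unfolding mon_atom_Pfin1_iff[OF pair] by metis
qed

theorem proposition2p3:
  fixes X :: "'a::monoid_mult set"
  assumes "X \<in> Pfin1"
  shows "(mon_irreducible Pfin1 setmul {1} X \<and> \<not> mon_atom Pfin1 setmul {1} X) \<longleftrightarrow>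
         (\<exists>x. x \<noteq> 1 \<and> X = {1, x} \<and> (x ^ 2 = 1 \<or> x ^ 2 = x))"
proof
  assume "mon_irreducible Pfin1 setmul {1} X \<and> \<not> mon_atom Pfin1 setmul {1} X"
  then have irr: "mon_irreducible Pfin1 setmul {1} X" and "\<not> mon_atom Pfin1 setmul {1} X"
    by simp_all
  then obtain A B where AB: "A \<in> Pfin1" "B \<in> Pfin1" "A \<noteq> {1}" "B \<noteq> {1}" "X = setmul A B"
    using assms by (auto simp: mon_atom_Pfin1_iff mon_irreducible_Pfin1_iff)
  with irr have "A = X \<or> B = X"
    using mon_irreducible_Pfin1_factor by metis
  with irr AB have "\<exists>x. x \<noteq> 1 \<and> X = {1, x} \<and> x * x \<in> X"
    using mon_irreducible_Pfin1_absorbing_right mon_irreducible_Pfin1_absorbing_left by metis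
  then show "\<exists>x. x \<noteq> 1 \<and> X = {1, x} \<and> (x ^ 2 = 1 \<or> x ^ 2 = x)"
    by (auto simp: power2_eq_square)
next
  assume "\<exists>x. x \<noteq> 1 \<and> X = {1, x} \<and> (x ^ 2 = 1 \<or> x ^ 2 = x)"
  then obtain x where "x \<noteq> 1" "X = {1, x}" "x * x \<in> {1, x}"
    by (auto simp: power2_eq_square)
  then show "mon_irreducible Pfin1 setmul {1} X \<and> \<not> mon_atom Pfin1 setmul {1} X"
    using mon_irreducible_Pfin1_pair not_mon_atom_Pfin1_pair by blast
qed

end
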